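(* Let $X$ be a Grothendieck Banach space and let $M$ be a closed subspace of $X$ such that the quotient $X/M$ is separable. Then $M$ is a Grothendieck space.
   Context: A Banach space $Z$ is called a Grothendieck space if every $\sigma(Z^*,Z)$-convergent (i.e. weak$^*$-convergent) sequence in the dual $Z^*$ is $\sigma(Z^*,Z^{**})$-convergent (i.e. weakly convergent). *)

theory Defs
  imports "HOL-Analysis.Analysis"
begin

text \<open>Continuous dual of a linear subspace S (with the induced norm) of a real normed space.
  Functionals are represented extensionally: they vanish outside S.\<close>
definition sdual :: "'a::real_normed_vector set \<Rightarrow> ('a \<Rightarrow> real) set" where
  "sdual S = {f. (\<forall>x\<in>S. \<forall>y\<in>S. f (x + y) = f x + f y)
               \<and> (\<forall>c. \<forall>x\<in>S. f (c *\<^sub>R x) = c * f x)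
               \<and> (\<exists>K. \<forall>x\<in>S. \<bar>f x\<bar> \<le> K * norm x)
               \<and> (\<forall>x. x \<notin> S \<longrightarrow> f x = 0)}"

definition sdual_norm :: "'a::real_normed_vector set \<Rightarrow> ('a \<Rightarrow> real) \<Rightarrow> real" where
  "sdual_norm S f = (SUP x\<in>{x\<in>S. norm x \<le> 1}. \<bar>f x\<bar>)"

definition sbidual :: "'a::real_normed_vector set \<Rightarrow> (('a \<Rightarrow> real) \<Rightarrow> real) set" where
  "sbidual S = {\<Phi>. (\<forall>f\<in>sdual S. \<forall>g\<in>sdual S. \<Phi> (\<lambda>x. f x + g x) = \<Phi> f + \<Phi> g)
               \<and> (\<forall>c. \<forall>f\<in>sdual S. \<Phi> (\<lambda>x. c * f x) = c * \<Phi> f)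
               \<and> (\<exists>K. \<forall>f\<in>sdual S. \<bar>\<Phi> f\<bar> \<le> K * sdual_norm S f)}"

definition grothendieck_space :: "'a::real_normed_vector set \<Rightarrow> bool" where
  "grothendieck_space S \<longleftrightarrow>
     (\<forall>g. (\<forall>n. g n \<in> sdual S) \<longrightarrow>
        (\<exists>g0\<in>sdual S. \<forall>x\<in>S. (\<lambda>n. g n x) \<longlonglongrightarrow> g0 x) \<longrightarrow>
        (\<exists>h\<in>sdual S. \<forall>\<Phi>\<in>sbidual S. (\<lambda>n. \<Phi> (g n)) \<longlonglongrightarrow> \<Phi> h))"

text \<open>The quotient X/M (quotient norm of x + M is infdist x M) is separable:
  some countable set of cosets d + M (d \<in> D) is dense in X/M.\<close>
definition quotient_separable :: "'a::real_normed_vector set \<Rightarrow> bool" where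
  "quotient_separable M \<longleftrightarrow>
     (\<exists>D. countable D \<and> (\<forall>x. \<forall>e>0. \<exists>d\<in>D. infdist (x - d) M < e))"

end

(*
  A weak*-null sequence (u n) in the dual of M is weakly null as soon as each of its subsequences
  has a weakly null subsequence. By uniform boundedness the u n share a bound B, and Hahn-Banach
  extends them to functionals F n on X with the same bound. Separability of X/M gives a countable
  D with D + M dense in X; along a diagonal subsequence the F n converge on D, they converge on M
  because the u n do, hence on D + M and, by the uniform bound, on all of X, to some L in the dual
  of X that vanishes on M. The differences F n - L are then weak*-null in the dual of X, hence
  weakly null because X is a Grothendieck space. Restricting them to M gives back the u n, and
  every element of the bidual of M becomes one of the bidual of X by precomposition with
  restriction, so these u n are weakly null.
*)

theory Submission
  imports Defs "HOL-Library.Diagonal_Subsequence"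
begin

section \<open>The Hahn--Banach extension theorem\<close>

definition sublinear :: "('a::real_vector \<Rightarrow> real) \<Rightarrow> bool" where
  "sublinear p \<longleftrightarrow> (\<forall>x y. p (x + y) \<le> p x + p y) \<and> (\<forall>t x. 0 < t \<longrightarrow> p (t *\<^sub>R x) = t * p x)"

lemma sublinear_norm: "0 \<le> K \<Longrightarrow> sublinear (\<lambda>x. K * norm x)"
  unfolding sublinear_def
  by (auto simp: distrib_left[symmetric] intro: mult_left_mono norm_triangle_ineq)

text \<open>Partial linear functionals are handled through their graphs, so that the union of a
  chain of them is again one and Zorn's lemma applies directly.\<close>

definition linear_graph :: "('a::real_vector \<times> real) set \<Rightarrow> bool" where
  "linear_graph G \<longleftrightarrow> single_valued G
     \<and> (\<forall>x a y b. (x, a) \<in> G \<longrightarrow> (y, b) \<in> G \<longrightarrow> (x + y, a + b) \<in> G)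
     \<and> (\<forall>c x a. (x, a) \<in> G \<longrightarrow> (c *\<^sub>R x, c * a) \<in> G)"

lemma linear_graphD:
  assumes "linear_graph G"
  shows "(x, a) \<in> G \<Longrightarrow> (x, b) \<in> G \<Longrightarrow> a = b"
    and "(x, a) \<in> G \<Longrightarrow> (y, b) \<in> G \<Longrightarrow> (x + y, a + b) \<in> G"
    and "(x, a) \<in> G \<Longrightarrow> (c *\<^sub>R x, c * a) \<in> G"
  using assms unfolding linear_graph_def single_valued_def by blast+

lemma linear_graph_zero: "linear_graph G \<Longrightarrow> (x, a) \<in> G \<Longrightarrow> (0, 0) \<in> G"
  using linear_graphD(3)[of G x a 0] by simp

lemma linear_graph_Union:
  assumes "\<And>G. G \<in> C \<Longrightarrow> linear_graph G" and "chain\<^sub>\<subseteq> C"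
  shows "linear_graph (\<Union>C)"
proof -
  have common: "\<exists>G\<in>C. p \<in> G \<and> q \<in> G" if pq: "p \<in> \<Union>C" "q \<in> \<Union>C" for p q
  proof -
    obtain A B where "A \<in> C" "p \<in> A" "B \<in> C" "q \<in> B"
      using pq by blast
    moreover from this have "A \<subseteq> B \<or> B \<subseteq> A"
      using \<open>chain\<^sub>\<subseteq> C\<close> unfolding chain_subset_def by blast
    ultimately show ?thesis
      by blast
  qed
  show ?thesis
    unfolding linear_graph_def single_valued_def
  proof (intro conjI allI impI)
    fix x a b assume "(x, a) \<in> \<Union>C" "(x, b) \<in> \<Union>C"
    with common obtain G where "G \<in> C" "(x, a) \<in> G" "(x, b) \<in> G" by blast
    then show "a = b" using assms(1) linear_graphD(1) by blast
  next
    fix x a y b assume "(x, a) \<in> \<Union>C" "(y, b) \<in> \<Union>C"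
    with common obtain G where "G \<in> C" "(x, a) \<in> G" "(y, b) \<in> G" by blast
    then show "(x + y, a + b) \<in> \<Union>C" using assms(1) linear_graphD(2) by blast
  next
    fix c x a assume "(x, a) \<in> \<Union>C"
    then show "(c *\<^sub>R x, c * a) \<in> \<Union>C" using assms(1) linear_graphD(3) by blast
  qed
qed

lemma linear_graph_imp_linear:
  assumes G: "linear_graph G" and total: "Domain G = UNIV"
  obtains F where "linear F" and "\<And>x. (x, F x) \<in> G"
proof -
  define F where "F x = (SOME a. (x, a) \<in> G)" for x
  have graph: "(x, F x) \<in> G" for x
  proof -
    have "x \<in> Domain G"
      using total by simp
    then show ?thesis
      unfolding F_def Domain_iff by (rule someI_ex)
  qed
  have "linear F"
  proof (rule linearI)
    show "F (x + y) = F x + F y" for x y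
      using linear_graphD(1)[OF G graph linear_graphD(2)[OF G graph graph]] .
    show "F (c *\<^sub>R x) = c *\<^sub>R F x" for c x
      using linear_graphD(1)[OF G graph linear_graphD(3)[OF G graph]] by simp
  qed
  then show thesis
    using that graph by blast
qed

definition extend_graph :: "('a::real_vector \<times> real) set \<Rightarrow> 'a \<Rightarrow> real \<Rightarrow> ('a \<times> real) set" where
  "extend_graph G x0 c = {(y + t *\<^sub>R x0, a + t * c) | y a t. (y, a) \<in> G}"

lemma extend_graphI: "(y, a) \<in> G \<Longrightarrow> (y + t *\<^sub>R x0, a + t * c) \<in> extend_graph G x0 c"
  unfolding extend_graph_def by blast

lemma extend_graphE:
  assumes "(x, b) \<in> extend_graph G x0 c"
  obtains y a t where "(y, a) \<in> G" "x = y + t *\<^sub>R x0" "b = a + t * c"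
  using assms unfolding extend_graph_def by blast

lemma linear_graph_extend_graph:
  assumes G: "linear_graph G" and x0: "x0 \<notin> Domain G"
  shows "linear_graph (extend_graph G x0 c)"
proof -
  note G' = linear_graphD[OF G]
  have unique: "t1 = t2 \<and> a1 = a2"
    if "y1 + t1 *\<^sub>R x0 = y2 + t2 *\<^sub>R x0" "(y1, a1) \<in> G" "(y2, a2) \<in> G" for y1 t1 a1 y2 t2 a2
  proof -
    have "(y2 - y1, a2 - a1) \<in> G"
      using G'(2)[OF that(3) G'(3)[OF that(2), of "-1"]] by simp
    then have "((1 / (t1 - t2)) *\<^sub>R (y2 - y1), (1 / (t1 - t2)) * (a2 - a1)) \<in> G"
      by (rule G'(3))
    moreover have "y2 - y1 = (t1 - t2) *\<^sub>R x0"
      using that(1) by (simp add: algebra_simps)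
    ultimately have "t1 = t2"
      using x0 by (cases "t1 = t2") (auto simp: Domain_iff)
    then show ?thesis
      using that G'(1) by auto
  qed
  show ?thesis
    unfolding linear_graph_def single_valued_def
  proof (intro conjI allI impI)
    fix x a b
    assume "(x, a) \<in> extend_graph G x0 c" "(x, b) \<in> extend_graph G x0 c"
    then show "a = b"
      by (elim extend_graphE) (use unique in force)
  next
    fix x a y b
    assume "(x, a) \<in> extend_graph G x0 c" "(y, b) \<in> extend_graph G x0 c"
    then obtain y1 a1 t1 y2 a2 t2 where G12: "(y1, a1) \<in> G" "(y2, a2) \<in> G"
      and "x = y1 + t1 *\<^sub>R x0" "a = a1 + t1 * c" "y = y2 + t2 *\<^sub>R x0" "b = a2 + t2 * c"
      by (metis extend_graphE)
    then have "(x + y, a + b) = ((y1 + y2) + (t1 + t2) *\<^sub>R x0, (a1 + a2) + (t1 + t2) * c)"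
      by (simp add: algebra_simps)
    then show "(x + y, a + b) \<in> extend_graph G x0 c"
      using extend_graphI[OF G'(2)[OF G12]] by simp
  next
    fix r x a
    assume "(x, a) \<in> extend_graph G x0 c"
    then obtain y a1 t where G1: "(y, a1) \<in> G" and "x = y + t *\<^sub>R x0" "a = a1 + t * c"
      by (metis extend_graphE)
    then have "(r *\<^sub>R x, r * a) = (r *\<^sub>R y + (r * t) *\<^sub>R x0, r * a1 + (r * t) * c)"
      by (simp add: algebra_simps)
    then show "(r *\<^sub>R x, r * a) \<in> extend_graph G x0 c"
      using extend_graphI[OF G'(3)[OF G1]] by simp
  qed
qed

lemma extend_graph_dominated:
  assumes p: "sublinear p" and G: "linear_graph G" and dom: "\<forall>(x, a)\<in>G. a \<le> p x"
    and c: "\<And>y a. (y, a) \<in> G \<Longrightarrow> a - p (y - x0) \<le> c \<and> c \<le> p (y + x0) - a"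
  shows "\<forall>(x, b)\<in>extend_graph G x0 c. b \<le> p x"
proof (clarify elim!: extend_graphE)
  fix y :: 'a and a t :: real
  assume ya: "(y, a) \<in> G"
  have hom: "p (s *\<^sub>R v) = s * p v" if "0 < s" for s v
    using p that by (simp add: sublinear_def)
  consider "t = 0" | "0 < t" | "t < 0" by linarith
  then show "a + t * c \<le> p (y + t *\<^sub>R x0)"
  proof cases
    case 1
    then show ?thesis using dom ya by auto
  next
    case 2
    have "c \<le> p ((1 / t) *\<^sub>R y + x0) - (1 / t) * a"
      using c[OF linear_graphD(3)[OF G ya]] by blast
    also have "(1 / t) *\<^sub>R y + x0 = (1 / t) *\<^sub>R (y + t *\<^sub>R x0)"
      using 2 by (simp add: algebra_simps)
    finally have "t * c \<le> t * ((1 / t) * p (y + t *\<^sub>R x0) - (1 / t) * a)"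
      using 2 by (simp add: hom)
    then show ?thesis
      using 2 by (simp add: algebra_simps)
  next
    case 3
    define s where "s = - t"
    have s: "0 < s" using 3 by (simp add: s_def)
    have "(1 / s) * a - p ((1 / s) *\<^sub>R y - x0) \<le> c"
      using c[OF linear_graphD(3)[OF G ya]] by blast
    also have "(1 / s) *\<^sub>R y - x0 = (1 / s) *\<^sub>R (y + t *\<^sub>R x0)"
      using s by (simp add: s_def algebra_simps)
    finally have "s * ((1 / s) * a - (1 / s) * p (y + t *\<^sub>R x0)) \<le> s * c"
      using s by (simp add: hom)
    then show ?thesis
      using s by (simp add: s_def algebra_simps)
  qed
qed

lemma sublinear_extension_value:
  assumes p: "sublinear p" and G: "linear_graph G" "G \<noteq> {}" and dom: "\<forall>(x, a)\<in>G. a \<le> p x"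
  obtains c where "\<And>y a. (y, a) \<in> G \<Longrightarrow> a - p (y - x0) \<le> c \<and> c \<le> p (y + x0) - a"
proof
  have below: "a - p (y - x0) \<le> p (z + x0) - b" if "(y, a) \<in> G" "(z, b) \<in> G" for y a z b
  proof -
    have "a + b \<le> p (y + z)"
      using dom linear_graphD(2)[OF G(1) that] by auto
    also have "y + z = (y - x0) + (z + x0)"
      by simp
    also have "p \<dots> \<le> p (y - x0) + p (z + x0)"
      using p unfolding sublinear_def by blast
    finally show ?thesis by simp
  qed
  define S where "S = {a - p (y - x0) | y a. (y, a) \<in> G}"
  have "S \<noteq> {}" using G(2) by (auto simp: S_def)
  moreover have "bdd_above S"
    using G(2) below unfolding bdd_above_def S_def by fast
  ultimately show "a - p (y - x0) \<le> Sup S \<and> Sup S \<le> p (y + x0) - a" if "(y, a) \<in> G" for y a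
    using that below by (auto intro!: cSup_upper cSup_least simp: S_def)
qed

lemma dominated_linear_graph_extension:
  assumes p: "sublinear p" and G: "linear_graph G" "(0, 0) \<in> G" and dom: "\<forall>(x, a)\<in>G. a \<le> p x"
    and x0: "x0 \<notin> Domain G"
  obtains H where "linear_graph H" "G \<subseteq> H" "\<forall>(x, a)\<in>H. a \<le> p x" "x0 \<in> Domain H"
proof -
  obtain c where c: "\<And>y a. (y, a) \<in> G \<Longrightarrow> a - p (y - x0) \<le> c \<and> c \<le> p (y + x0) - a"
    using sublinear_extension_value[OF p G(1) _ dom] G(2) by blast
  have "G \<subseteq> extend_graph G x0 c"
    using extend_graphI[of _ _ G 0 x0 c] by auto
  moreover have "(x0, c) \<in> extend_graph G x0 c"
    using extend_graphI[OF G(2), of 1 x0 c] by simp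
  ultimately show thesis
    using that linear_graph_extend_graph[OF G(1) x0] extend_graph_dominated[OF p G(1) dom c] by blast
qed

theorem Hahn_Banach_sublinear:
  assumes p: "sublinear p" and M: "subspace M"
    and add: "\<And>x y. x \<in> M \<Longrightarrow> y \<in> M \<Longrightarrow> f (x + y) = f x + f y"
    and scale: "\<And>c x. x \<in> M \<Longrightarrow> f (c *\<^sub>R x) = c * f x"
    and dom: "\<And>x. x \<in> M \<Longrightarrow> f x \<le> p x"
  obtains F where "linear F" and "\<And>x. F x \<le> p x" and "\<And>x. x \<in> M \<Longrightarrow> F x = f x"
proof -
  define A where "A = {G. linear_graph G \<and> (\<lambda>x. (x, f x)) ` M \<subseteq> G \<and> (\<forall>(x, a)\<in>G. a \<le> p x)}"
  have "(\<lambda>x. (x, f x)) ` M \<in> A"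
    unfolding A_def linear_graph_def single_valued_def
    using M add scale dom by (auto simp: subspace_def)
  moreover have "\<Union>C \<in> A" if "C \<in> chains A" "C \<noteq> {}" for C
    using that linear_graph_Union[of C] unfolding A_def chains_def by blast
  ultimately have "\<forall>C\<in>chains A. \<exists>U\<in>A. \<forall>X\<in>C. X \<subseteq> U"
    by (metis Union_upper empty_iff)
  from Zorn_Lemma2[OF this] obtain G where G: "G \<in> A" and maximal: "\<forall>H\<in>A. G \<subseteq> H \<longrightarrow> H = G"
    by blast
  have lin: "linear_graph G" and graph: "\<And>x. x \<in> M \<Longrightarrow> (x, f x) \<in> G"
    and Gdom: "\<forall>(x, a)\<in>G. a \<le> p x"
    using G by (auto simp: A_def)
  have "(0, 0) \<in> G"
    using linear_graph_zero[OF lin graph[OF subspace_0[OF M]]] .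
  have "Domain G = UNIV"
  proof (rule ccontr)
    assume "Domain G \<noteq> UNIV"
    then obtain x0 where "x0 \<notin> Domain G"
      by blast
    from dominated_linear_graph_extension[OF p lin \<open>(0, 0) \<in> G\<close> Gdom this]
    obtain H where "linear_graph H" "G \<subseteq> H" "\<forall>(x, a)\<in>H. a \<le> p x" "x0 \<in> Domain H" .
    then show False
      using maximal graph \<open>x0 \<notin> Domain G\<close> unfolding A_def by blast
  qed
  then obtain F where "linear F" and FG: "\<And>x. (x, F x) \<in> G"
    using linear_graph_imp_linear[OF lin] by blast
  moreover have "F x \<le> p x" for x
    using Gdom FG[of x] by auto
  moreover have "F x = f x" if "x \<in> M" for x
    using linear_graphD(1)[OF lin FG graph[OF that]] .
  ultimately show thesis using that by blast
qed

section \<open>Duals of subspaces\<close>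

lemma sdualD:
  assumes "f \<in> sdual S"
  shows "x \<in> S \<Longrightarrow> y \<in> S \<Longrightarrow> f (x + y) = f x + f y"
    and "x \<in> S \<Longrightarrow> f (c *\<^sub>R x) = c * f x"
    and "x \<notin> S \<Longrightarrow> f x = 0"
    and "\<exists>K\<ge>0. \<forall>x\<in>S. \<bar>f x\<bar> \<le> K * norm x"
proof -
  show "x \<in> S \<Longrightarrow> y \<in> S \<Longrightarrow> f (x + y) = f x + f y" "x \<in> S \<Longrightarrow> f (c *\<^sub>R x) = c * f x"
    "x \<notin> S \<Longrightarrow> f x = 0"
    using assms by (auto simp: sdual_def)
  obtain K where "\<forall>x\<in>S. \<bar>f x\<bar> \<le> K * norm x"
    using assms by (auto simp: sdual_def)
  then have "\<forall>x\<in>S. \<bar>f x\<bar> \<le> max K 0 * norm x"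
    by (meson max.cobounded1 mult_right_mono norm_ge_zero order_trans)
  then show "\<exists>K\<ge>0. \<forall>x\<in>S. \<bar>f x\<bar> \<le> K * norm x"
    by (meson max.cobounded2)
qed

lemma sdual_0: "f \<in> sdual S \<Longrightarrow> f 0 = 0"
  using sdualD(2)[of f S 0 0] sdualD(3)[of f S 0] by (cases "0 \<in> S") auto

lemma sdual_zero_fun: "(\<lambda>x. 0) \<in> sdual S"
  unfolding sdual_def by (auto intro: exI[of _ 0])

lemma sdual_diff:
  assumes "f \<in> sdual S" "subspace S" "x \<in> S" "y \<in> S"
  shows "f (x - y) = f x - f y"
  using sdualD(1)[OF assms(1) assms(3), of "(-1) *\<^sub>R y"] sdualD(2)[OF assms(1) assms(4), of "-1"]
    assms(2,4) by (simp add: subspace_neg)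

lemma sdual_scale:
  assumes f: "f \<in> sdual S"
  shows "(\<lambda>x. c * f x) \<in> sdual S"
proof -
  obtain K where "\<forall>x\<in>S. \<bar>f x\<bar> \<le> K * norm x"
    using sdualD(4)[OF f] by blast
  then have "\<forall>x\<in>S. \<bar>c * f x\<bar> \<le> (\<bar>c\<bar> * K) * norm x"
    by (simp add: abs_mult mult.assoc mult_left_mono)
  then have "\<exists>K. \<forall>x\<in>S. \<bar>c * f x\<bar> \<le> K * norm x"
    by blast
  then show ?thesis
    using sdualD(1-3)[OF f] unfolding sdual_def by (auto simp: algebra_simps)
qed

lemma sdual_minus:
  assumes f: "f \<in> sdual S" and g: "g \<in> sdual S"
  shows "(\<lambda>x. f x - g x) \<in> sdual S"
proof -
  obtain K1 K2 where "\<forall>x\<in>S. \<bar>f x\<bar> \<le> K1 * norm x" "\<forall>x\<in>S. \<bar>g x\<bar> \<le> K2 * norm x"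
    using sdualD(4)[OF f] sdualD(4)[OF g] by blast
  then have "\<forall>x\<in>S. \<bar>f x - g x\<bar> \<le> (K1 + K2) * norm x"
    by (smt (verit, best) distrib_right)
  then have "\<exists>K. \<forall>x\<in>S. \<bar>f x - g x\<bar> \<le> K * norm x"
    by blast
  then show ?thesis
    using sdualD(1-3)[OF f] sdualD(1-3)[OF g] unfolding sdual_def by (auto simp: algebra_simps)
qed

lemma sdual_UNIV: "sdual UNIV = Collect bounded_linear"
proof safe
  fix f :: "'a \<Rightarrow> real" assume f: "f \<in> sdual UNIV"
  then obtain K where "\<forall>x. \<bar>f x\<bar> \<le> K * norm x"
    using sdualD(4) by blast
  then show "bounded_linear f"
    using sdualD(1,2)[OF f] by (intro bounded_linear_intro[where K = K]) (auto simp: mult.commute)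
next
  fix f :: "'a \<Rightarrow> real" assume "bounded_linear f"
  then interpret bounded_linear f .
  obtain K where "\<forall>x. norm (f x) \<le> norm x * K"
    using bounded by blast
  then show "f \<in> sdual UNIV"
    unfolding sdual_def by (auto simp: add scale mult.commute)
qed

corollary Hahn_Banach_norm:
  assumes M: "subspace M" and f: "f \<in> sdual M"
    and K: "0 \<le> K" and bound: "\<And>x. x \<in> M \<Longrightarrow> \<bar>f x\<bar> \<le> K * norm x"
  obtains F where "bounded_linear F" and "\<And>x. \<bar>F x\<bar> \<le> K * norm x" and "\<And>x. x \<in> M \<Longrightarrow> F x = f x"
proof -
  have "f x \<le> K * norm x" if "x \<in> M" for x
    using bound[OF that] by linarith
  then obtain F where F: "linear F" "\<And>x. F x \<le> K * norm x" and FM: "\<And>x. x \<in> M \<Longrightarrow> F x = f x"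
    using Hahn_Banach_sublinear[OF sublinear_norm[OF K] M sdualD(1)[OF f] sdualD(2)[OF f]] by blast
  have "\<bar>F x\<bar> \<le> K * norm x" for x
    using F(2)[of x] F(2)[of "- x"] linear_neg[OF F(1), of x] by simp
  moreover from this have "bounded_linear F"
    using F(1) by (intro bounded_linear_intro[where K = K]) (auto simp: linear_add linear_scale mult.commute)
  ultimately show thesis using that FM by blast
qed

lemma sdual_continuous:
  assumes "f \<in> sdual S" "subspace S"
  shows "continuous_on S f"
proof -
  obtain K where "0 \<le> K" and K: "\<forall>x\<in>S. \<bar>f x\<bar> \<le> K * norm x"
    using sdualD(4)[OF assms(1)] by blast
  have "dist (f y) (f x) \<le> K * dist y x" if "x \<in> S" "y \<in> S" for x y
  proof -
    have "y - x \<in> S"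
      using assms(2) that by (simp add: subspace_diff)
    then show ?thesis
      using K[rule_format, OF \<open>y - x \<in> S\<close>] sdual_diff[OF assms that(2,1)] by (simp add: dist_norm dist_real_def)
  qed
  then show ?thesis
    using \<open>0 \<le> K\<close> by (intro lipschitz_on_continuous_on[of K]) (auto intro!: lipschitz_onI)
qed

lemma sdual_norm_bdd:
  assumes "f \<in> sdual S"
  shows "bdd_above ((\<lambda>x. \<bar>f x\<bar>) ` {x\<in>S. norm x \<le> 1})"
proof -
  obtain K where K: "K \<ge> 0" "\<forall>x\<in>S. \<bar>f x\<bar> \<le> K * norm x"
    using sdualD(4)[OF assms] by blast
  have "\<bar>f x\<bar> \<le> K" if "x \<in> S" "norm x \<le> 1" for x
    using K that order_trans[of _ "K * norm x" K] by (simp add: mult_left_le)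
  then show ?thesis
    unfolding bdd_above_def by blast
qed

lemma sdual_norm_bound:
  assumes f: "f \<in> sdual S" and S: "subspace S" and x: "x \<in> S"
  shows "\<bar>f x\<bar> \<le> sdual_norm S f * norm x"
proof (cases "x = 0")
  case True
  then show ?thesis using sdual_0[OF f] by simp
next
  case False
  have "(1 / norm x) *\<^sub>R x \<in> {x\<in>S. norm x \<le> 1}"
    using False x S by (simp add: subspace_scale)
  then have "\<bar>f ((1 / norm x) *\<^sub>R x)\<bar> \<le> sdual_norm S f"
    unfolding sdual_norm_def by (rule cSUP_upper[OF _ sdual_norm_bdd[OF f]])
  then show ?thesis
    using False sdualD(2)[OF f x, of "1 / norm x"] by (simp add: abs_mult field_simps)
qed

lemma sdual_norm_nonneg:
  assumes "f \<in> sdual S" "subspace S"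
  shows "0 \<le> sdual_norm S f"
proof -
  have "\<bar>f 0\<bar> \<le> sdual_norm S f"
    unfolding sdual_norm_def using subspace_0[OF assms(2)]
    by (intro cSUP_upper[OF _ sdual_norm_bdd[OF assms(1)]]) simp
  then show ?thesis
    by simp
qed

lemma sbidualD:
  assumes "\<Phi> \<in> sbidual S"
  shows "f \<in> sdual S \<Longrightarrow> g \<in> sdual S \<Longrightarrow> \<Phi> (\<lambda>x. f x + g x) = \<Phi> f + \<Phi> g"
    and "f \<in> sdual S \<Longrightarrow> \<Phi> (\<lambda>x. c * f x) = c * \<Phi> f"
  using assms unfolding sbidual_def by blast+

lemma sbidual_zero: "\<Phi> \<in> sbidual S \<Longrightarrow> \<Phi> (\<lambda>x. 0) = 0"
  using sbidualD(2)[OF _ sdual_zero_fun, of \<Phi> S 0] by simp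

lemma sbidual_minus:
  assumes "\<Phi> \<in> sbidual S" "f \<in> sdual S" "g \<in> sdual S"
  shows "\<Phi> (\<lambda>x. f x - g x) = \<Phi> f - \<Phi> g"
  using sbidualD(1)[OF assms(1,2) sdual_scale[OF assms(3)], of "-1"] sbidualD(2)[OF assms(1,3), of "-1"]
  by simp

lemma evaluation_sbidual:
  assumes "subspace S" "x \<in> S"
  shows "(\<lambda>f. f x) \<in> sbidual S"
proof -
  have "\<forall>f\<in>sdual S. \<bar>f x\<bar> \<le> norm x * sdual_norm S f"
    using sdual_norm_bound[OF _ assms] by (simp add: mult.commute)
  then show ?thesis
    unfolding sbidual_def by auto
qed

definition sdual_restrict :: "'a set \<Rightarrow> ('a \<Rightarrow> real) \<Rightarrow> 'a \<Rightarrow> real" where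
  "sdual_restrict M f = (\<lambda>x. if x \<in> M then f x else 0)"

lemma sdual_restrict_in_sdual:
  assumes "bounded_linear f" "subspace M"
  shows "sdual_restrict M f \<in> sdual M"
proof -
  interpret bounded_linear f by fact
  obtain K where "\<forall>x. norm (f x) \<le> norm x * K"
    using bounded by blast
  then show ?thesis
    using assms(2) unfolding sdual_def sdual_restrict_def
    by (auto simp: add scale mult.commute subspace_add subspace_scale)
qed

lemma sdual_norm_restrict_le:
  assumes "bounded_linear f" "subspace M"
  shows "sdual_norm M (sdual_restrict M f) \<le> sdual_norm UNIV f"
  unfolding sdual_norm_def
proof (rule cSUP_subset_mono)
  show "{x \<in> M. norm x \<le> 1} \<noteq> {}"
    using subspace_0[OF assms(2)] by auto
  show "bdd_above ((\<lambda>x. \<bar>f x\<bar>) ` {x \<in> UNIV. norm x \<le> 1})"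
    using sdual_norm_bdd[of f UNIV] assms(1) by (simp add: sdual_UNIV)
qed (auto simp: sdual_restrict_def)

lemma sbidual_comp_restrict:
  assumes "\<Phi> \<in> sbidual M" "subspace M"
  shows "(\<lambda>f. \<Phi> (sdual_restrict M f)) \<in> sbidual UNIV"
proof -
  obtain K where K: "\<forall>f\<in>sdual M. \<bar>\<Phi> f\<bar> \<le> K * sdual_norm M f"
    using assms(1) unfolding sbidual_def by blast
  have "\<bar>\<Phi> (sdual_restrict M f)\<bar> \<le> max K 0 * sdual_norm UNIV f" if "bounded_linear f" for f
  proof -
    have rf: "sdual_restrict M f \<in> sdual M"
      using sdual_restrict_in_sdual[OF that assms(2)] .
    have "\<bar>\<Phi> (sdual_restrict M f)\<bar> \<le> max K 0 * sdual_norm M (sdual_restrict M f)"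
      using K rf sdual_norm_nonneg[OF rf assms(2)]
      by (meson max.cobounded1 mult_right_mono order_trans)
    also have "\<dots> \<le> max K 0 * sdual_norm UNIV f"
      using sdual_norm_restrict_le[OF that assms(2)] by (simp add: mult_left_mono)
    finally show ?thesis .
  qed
  moreover have "sdual_restrict M (\<lambda>x. f x + g x) = (\<lambda>x. sdual_restrict M f x + sdual_restrict M g x)"
    and "sdual_restrict M (\<lambda>x. c * f x) = (\<lambda>x. c * sdual_restrict M f x)" for f g c
    by (auto simp: sdual_restrict_def)
  ultimately show ?thesis
    using sbidualD[OF assms(1)] sdual_restrict_in_sdual[OF _ assms(2)]
    unfolding sbidual_def sdual_UNIV by auto
qed

lemma grothendieck_space_null:
  assumes G: "grothendieck_space S" and S: "subspace S"
    and v: "\<And>n. v n \<in> sdual S" and lim: "\<And>x. x \<in> S \<Longrightarrow> (\<lambda>n. v n x) \<longlonglongrightarrow> 0"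
    and \<Phi>: "\<Phi> \<in> sbidual S"
  shows "(\<lambda>n. \<Phi> (v n)) \<longlonglongrightarrow> 0"
proof -
  have "\<forall>n. v n \<in> sdual S" "\<exists>g0\<in>sdual S. \<forall>x\<in>S. (\<lambda>n. v n x) \<longlonglongrightarrow> g0 x"
    using v lim by (blast, intro bexI[OF _ sdual_zero_fun]) blast
  then obtain h where h: "h \<in> sdual S" "\<And>\<Psi>. \<Psi> \<in> sbidual S \<Longrightarrow> (\<lambda>n. \<Psi> (v n)) \<longlonglongrightarrow> \<Psi> h"
    using G[unfolded grothendieck_space_def, rule_format, of v] by blast
  have "h x = 0" for x
  proof (cases "x \<in> S")
    case True
    then have "(\<lambda>n. v n x) \<longlonglongrightarrow> h x"
      using h(2)[OF evaluation_sbidual[OF S True]] by simp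
    then show ?thesis
      using LIMSEQ_unique lim[OF True] by blast
  next
    case False
    then show ?thesis
      using sdualD(3)[OF h(1)] by blast
  qed
  then have "h = (\<lambda>x. 0)"
    by blast
  then show ?thesis
    using h(2)[OF \<Phi>] sbidual_zero[OF \<Phi>] by simp
qed

lemma grothendieck_spaceI_null:
  assumes "\<And>u \<Phi>. (\<And>n. u n \<in> sdual S) \<Longrightarrow> (\<And>x. x \<in> S \<Longrightarrow> (\<lambda>n. u n x) \<longlonglongrightarrow> 0)
      \<Longrightarrow> \<Phi> \<in> sbidual S \<Longrightarrow> (\<lambda>n. \<Phi> (u n)) \<longlonglongrightarrow> 0"
  shows "grothendieck_space S"
  unfolding grothendieck_space_def
proof (intro allI impI)
  fix g :: "nat \<Rightarrow> 'a \<Rightarrow> real"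
  assume g: "\<forall>n. g n \<in> sdual S" and "\<exists>g0\<in>sdual S. \<forall>x\<in>S. (\<lambda>n. g n x) \<longlonglongrightarrow> g0 x"
  then obtain g0 where g0: "g0 \<in> sdual S" "\<And>x. x \<in> S \<Longrightarrow> (\<lambda>n. g n x) \<longlonglongrightarrow> g0 x"
    by blast
  have "(\<lambda>n. \<Phi> (g n)) \<longlonglongrightarrow> \<Phi> g0" if \<Phi>: "\<Phi> \<in> sbidual S" for \<Phi>
  proof -
    have "(\<lambda>n. \<Phi> (\<lambda>x. g n x - g0 x)) \<longlonglongrightarrow> 0"
    proof (rule assms[of "\<lambda>n x. g n x - g0 x" \<Phi>])
      show "(\<lambda>x. g n x - g0 x) \<in> sdual S" for n
        using g g0(1) by (simp add: sdual_minus)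
      show "(\<lambda>n. g n x - g0 x) \<longlonglongrightarrow> 0" if "x \<in> S" for x
        using tendsto_diff[OF g0(2)[OF that] tendsto_const, of "g0 x"] by simp
    qed (rule \<Phi>)
    then have "(\<lambda>n. \<Phi> (g n) - \<Phi> g0 + \<Phi> g0) \<longlonglongrightarrow> 0 + \<Phi> g0"
      using sbidual_minus[OF \<Phi> _ g0(1)] g by (intro tendsto_add) simp_all
    then show ?thesis
      by simp
  qed
  then show "\<exists>h\<in>sdual S. \<forall>\<Phi>\<in>sbidual S. (\<lambda>n. \<Phi> (g n)) \<longlonglongrightarrow> \<Phi> h"
    using g0(1) by blast
qed

section \<open>Subsequences and uniform boundedness\<close>

lemma LIMSEQ_subsubseq:
  fixes X :: "nat \<Rightarrow> 'a::topological_space"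
  assumes "\<And>q :: nat \<Rightarrow> nat. strict_mono q \<Longrightarrow> \<exists>s. strict_mono s \<and> (X \<circ> q \<circ> s) \<longlonglongrightarrow> L"
  shows "X \<longlonglongrightarrow> L"
proof (rule topological_tendstoI, rule ccontr)
  fix S assume "open S" "L \<in> S" and "\<not> eventually (\<lambda>n. X n \<in> S) sequentially"
  then have "infinite {n. X n \<notin> S}"
    by (simp add: not_eventually frequently_cofinite[symmetric] cofinite_eq_sequentially)
  then obtain q :: "nat \<Rightarrow> nat" where q: "strict_mono q" "\<And>n. X (q n) \<notin> S"
    using infinite_enumerate by blast
  from assms[OF q(1)] obtain s where "(X \<circ> q \<circ> s) \<longlonglongrightarrow> L"
    by blast
  then have "eventually (\<lambda>n. X (q (s n)) \<in> S) sequentially"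
    using \<open>open S\<close> \<open>L \<in> S\<close> by (auto dest: topological_tendstoD)
  then show False
    using q(2) by auto
qed

lemma diagonal_convergent_subseq:
  fixes f :: "nat \<Rightarrow> 'b \<Rightarrow> 'c::heine_borel"
  assumes "countable D" and bounded: "\<And>x. x \<in> D \<Longrightarrow> bounded (range (\<lambda>n. f n x))"
  obtains s where "strict_mono s" "\<And>x. x \<in> D \<Longrightarrow> convergent (\<lambda>n. f (s n) x)"
proof (cases "D = {}")
  case True
  then show thesis
    using that[of id] by (simp add: strict_mono_id)
next
  case False
  define d where "d = from_nat_into D"
  have range_d: "range d = D"
    using False assms(1) by (simp add: d_def)
  interpret subseqs "\<lambda>k s. convergent (\<lambda>n. f (s n) (d k))"
  proof
    fix k and s :: "nat \<Rightarrow> nat"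
    have "bounded (range (\<lambda>n. f (s n) (d k)))"
      using bounded[of "d k"] range_d by (auto intro: bounded_subset)
    then obtain l r where "strict_mono r" "((\<lambda>n. f (s n) (d k)) \<circ> r) \<longlonglongrightarrow> l"
      using bounded_imp_convergent_subsequence by blast
    then show "\<exists>r. strict_mono r \<and> convergent (\<lambda>n. f ((s \<circ> r) n) (d k))"
      by (auto simp: convergent_def o_def)
  qed
  have "convergent (\<lambda>n. f (diagseq n) (d k))" for k
  proof -
    have "convergent (\<lambda>n. f ((diagseq \<circ> (+) (Suc k)) n) (d k))"
      by (rule diagseq_holds) (auto dest: convergent_subseq_convergent simp: o_def)
    then obtain l where l: "(\<lambda>n. f (diagseq (n + Suc k)) (d k)) \<longlonglongrightarrow> l"
      by (auto simp: convergent_def o_def add.commute)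
    then have "(\<lambda>n. f (diagseq n) (d k)) \<longlonglongrightarrow> l"
      using LIMSEQ_offset[of "\<lambda>n. f (diagseq n) (d k)" "Suc k" l] by simp
    then show ?thesis
      by (auto simp: convergent_def)
  qed
  then show thesis
    using that[OF subseq_diagseq] range_d by blast
qed

lemma Baire_closed_cover_ball:
  fixes M :: "'a::complete_space set"
  assumes "closed M" "M \<noteq> {}"
    and closed: "\<And>k::nat. closedin (top_of_set M) (F k)" and cover: "M \<subseteq> (\<Union>k. F k)"
  obtains k x0 r where "x0 \<in> M" "0 < r" "ball x0 r \<inter> M \<subseteq> F k"
proof -
  have "completely_metrizable_space (top_of_set M)"
    using assms(1) by (intro completely_metrizable_space_closedin completely_metrizable_space_euclidean) simp
  moreover have "top_of_set M interior_of (\<Union>k. F k) = M"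
    using cover closed closedin_subset by (metis interior_of_topspace subset_antisym topspace_euclidean_subtopology UN_least)
  ultimately obtain k where "top_of_set M interior_of F k \<noteq> {}"
    using Baire_category_alt[of "top_of_set M" "range F"] closed assms(2) by auto
  then obtain x0 where x0: "x0 \<in> top_of_set M interior_of F k"
    by blast
  moreover have "openin (top_of_set M) (top_of_set M interior_of F k)"
    by simp
  ultimately obtain r where "0 < r" "ball x0 r \<inter> M \<subseteq> top_of_set M interior_of F k"
    unfolding openin_contains_ball by blast
  moreover have "x0 \<in> M"
    using x0 interior_of_subset_topspace by fastforce
  moreover have "top_of_set M interior_of F k \<subseteq> F k"
    by (rule interior_of_subset)
  ultimately show thesis
    using that[of x0 r k] by blast
qed

lemma sdual_bound_from_ball:
  assumes M: "subspace M" and u: "u \<in> sdual M" and x0: "x0 \<in> M" and r: "0 < r"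
    and ball: "\<And>y. y \<in> ball x0 r \<inter> M \<Longrightarrow> \<bar>u y\<bar> \<le> k" and x: "x \<in> M"
  shows "\<bar>u x\<bar> \<le> (4 * k / r) * norm x"
proof (cases "x = 0")
  case True
  then show ?thesis
    using sdual_0[OF u] by simp
next
  case False
  define t where "t = r / (2 * norm x)"
  have t: "0 < t" "t * norm x = r / 2"
    using r False by (simp_all add: t_def)
  have "x0 + t *\<^sub>R x \<in> ball x0 r \<inter> M" "x0 \<in> ball x0 r \<inter> M"
    using x0 x r t M by (simp_all add: dist_norm subspace_add subspace_scale)
  then have "\<bar>u (x0 + t *\<^sub>R x)\<bar> \<le> k" "\<bar>u x0\<bar> \<le> k"
    using ball by blast+
  moreover have "u (x0 + t *\<^sub>R x) = u x0 + t * u x"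
    using sdualD(1)[OF u x0] sdualD(2)[OF u x] M x by (simp add: subspace_scale)
  ultimately have "\<bar>t * u x\<bar> \<le> 2 * k"
    by linarith
  then have "t * \<bar>u x\<bar> \<le> 2 * k"
    using t(1) by (simp add: abs_mult)
  then show ?thesis
    using t r False by (simp add: t_def field_simps)
qed

lemma sdual_uniform_bound:
  fixes u :: "nat \<Rightarrow> 'a::banach \<Rightarrow> real"
  assumes M: "subspace M" "closed M" and u: "\<And>n. u n \<in> sdual M"
    and bounded: "\<And>x. x \<in> M \<Longrightarrow> bounded (range (\<lambda>n. u n x))"
  obtains B where "0 \<le> B" "\<And>n x. x \<in> M \<Longrightarrow> \<bar>u n x\<bar> \<le> B * norm x"
proof -
  define F where "F k = (\<Inter>n. M \<inter> (\<lambda>x. \<bar>u n x\<bar>) -` {..real k})" for k :: nat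
  have "closedin (top_of_set M) (F k)" for k
    unfolding F_def
  proof (intro closedin_INT)
    fix n
    have "continuous_on M (\<lambda>x. \<bar>u n x\<bar>)"
      using sdual_continuous[OF u M(1)] by (intro continuous_intros)
    then show "closedin (top_of_set M) (M \<inter> (\<lambda>x. \<bar>u n x\<bar>) -` {..real k})"
      by (rule continuous_closedin_preimage) simp
  qed simp
  moreover have "M \<subseteq> (\<Union>k. F k)"
  proof
    fix x assume "x \<in> M"
    then obtain C where "\<And>n. \<bar>u n x\<bar> \<le> C"
      using bounded by (auto simp: bounded_real)
    moreover obtain k :: nat where "C \<le> real k"
      using real_arch_simple by blast
    ultimately show "x \<in> (\<Union>k. F k)"
      using \<open>x \<in> M\<close> by (auto simp: F_def intro: order_trans)
  qed
  moreover have "M \<noteq> {}"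
    using subspace_0[OF M(1)] by blast
  ultimately obtain k x0 r where x0: "x0 \<in> M" "0 < r" "ball x0 r \<inter> M \<subseteq> F k"
    using Baire_closed_cover_ball[OF M(2)] by metis
  then have level: "\<bar>u n y\<bar> \<le> real k" if "y \<in> ball x0 r \<inter> M" for n y
    using that by (auto simp: F_def)
  show thesis
  proof (rule that[of "4 * real k / r"])
    show "0 \<le> 4 * real k / r"
      using x0(2) by simp
    show "\<bar>u n x\<bar> \<le> 4 * real k / r * norm x" if "x \<in> M" for n x
      using sdual_bound_from_ball[OF M(1) u[of n] x0(1,2) level that] .
  qed
qed

section \<open>Weak*-null sequences in the dual of a subspace\<close>

lemma uniformly_bounded_linear_convergent:
  fixes F :: "nat \<Rightarrow> 'a::real_normed_vector \<Rightarrow> 'b::banach"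
  assumes lin: "\<And>n. linear (F n)" and bound: "\<And>n x. norm (F n x) \<le> B * norm x"
    and conv: "\<And>y. y \<in> E \<Longrightarrow> convergent (\<lambda>n. F n y)"
    and dense: "\<And>x e. 0 < e \<Longrightarrow> \<exists>y\<in>E. norm (x - y) < e"
  shows "convergent (\<lambda>n. F n x)"
proof -
  have "Cauchy (\<lambda>n. F n x)"
  proof (rule metric_CauchyI)
    fix e :: real assume "0 < e"
    then obtain y where y: "y \<in> E" "norm (x - y) < e / (3 * (\<bar>B\<bar> + 1))"
      using dense[of "e / (3 * (\<bar>B\<bar> + 1))"] by auto
    have small: "norm (F n (x - y)) < e / 3" for n
    proof -
      have "norm (F n (x - y)) \<le> B * norm (x - y)"
        by (rule bound)
      also have "\<dots> \<le> (\<bar>B\<bar> + 1) * norm (x - y)"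
        by (intro mult_right_mono) auto
      also have "\<dots> < (\<bar>B\<bar> + 1) * (e / (3 * (\<bar>B\<bar> + 1)))"
        using y(2) by (intro mult_strict_left_mono) auto
      also have "\<dots> = e / 3"
        by (simp add: field_simps add_nonneg_eq_0_iff)
      finally show ?thesis .
    qed
    obtain N where N: "\<And>m n. N \<le> m \<Longrightarrow> N \<le> n \<Longrightarrow> dist (F m y) (F n y) < e / 3"
      using metric_CauchyD[OF convergent_Cauchy[OF conv[OF y(1)]], of "e / 3"] \<open>0 < e\<close> by auto
    have "dist (F m x) (F n x) < e" if "N \<le> m" "N \<le> n" for m n
    proof -
      have "dist (F m x) (F n x) = norm (F m (x - y) + (F m y - F n y) - F n (x - y))"
        using linear_diff[OF lin] by (simp add: dist_norm algebra_simps)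
      also have "\<dots> \<le> norm (F m (x - y) + (F m y - F n y)) + norm (F n (x - y))"
        by (rule norm_triangle_ineq4)
      also have "\<dots> \<le> norm (F m (x - y)) + dist (F m y) (F n y) + norm (F n (x - y))"
        using norm_triangle_ineq by (simp add: dist_norm)
      finally show ?thesis
        using small[of m] small[of n] N[OF that] by linarith
    qed
    then show "\<exists>N. \<forall>m\<ge>N. \<forall>n\<ge>N. dist (F m x) (F n x) < e"
      by blast
  qed
  then show ?thesis
    by (simp add: Cauchy_convergent_iff)
qed

lemma bounded_linear_pointwise_limit:
  fixes F :: "nat \<Rightarrow> 'a::real_normed_vector \<Rightarrow> 'b::real_normed_vector"
  assumes lin: "\<And>n. linear (F n)" and bound: "\<And>n x. norm (F n x) \<le> B * norm x"
    and lim: "\<And>x. (\<lambda>n. F n x) \<longlonglongrightarrow> L x"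
  shows "bounded_linear L"
proof (rule bounded_linear_intro[where K = B])
  show "L (x + y) = L x + L y" for x y
    using lim[of "x + y"] tendsto_add[OF lim lim, of x y] LIMSEQ_unique linear_add[OF lin] by fastforce
  show "L (c *\<^sub>R x) = c *\<^sub>R L x" for c x
    using lim[of "c *\<^sub>R x"] tendsto_scaleR[OF tendsto_const lim, of c x] LIMSEQ_unique linear_scale[OF lin]
    by fastforce
  show "norm (L x) \<le> norm x * B" for x
    using bound by (intro LIMSEQ_le_const2[OF tendsto_norm[OF lim]]) (auto simp: mult.commute)
qed

lemma quotient_separable_dense:
  assumes "quotient_separable M" "M \<noteq> {}"
  obtains D where "countable D" "\<And>x e. 0 < e \<Longrightarrow> \<exists>d\<in>D. \<exists>m\<in>M. norm (x - (d + m)) < e"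
proof -
  obtain D where D: "countable D" "\<And>x e. 0 < e \<Longrightarrow> \<exists>d\<in>D. infdist (x - d) M < e"
    using assms(1) unfolding quotient_separable_def by blast
  have "\<exists>d\<in>D. \<exists>m\<in>M. norm (x - (d + m)) < e" if e: "0 < e" for x e
  proof -
    obtain d where "d \<in> D" "(INF m\<in>M. dist (x - d) m) < e"
      using D(2)[OF e] assms(2) by (auto simp: infdist_notempty)
    then obtain m where "m \<in> M" "dist (x - d) m < e"
      using assms(2) by (auto simp: cINF_less_iff)
    then show ?thesis
      using \<open>d \<in> D\<close> by (auto simp: dist_norm algebra_simps)
  qed
  then show thesis
    using that D(1) by blast
qed

lemma quotient_separable_convergent_subseq:
  fixes F :: "nat \<Rightarrow> 'a::real_normed_vector \<Rightarrow> real"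
  assumes M: "quotient_separable M" "subspace M"
    and lin: "\<And>n. linear (F n)" and bound: "\<And>n x. \<bar>F n x\<bar> \<le> B * norm x"
    and conv: "\<And>x. x \<in> M \<Longrightarrow> convergent (\<lambda>n. F n x)"
  obtains s where "strict_mono s" "\<And>x. convergent (\<lambda>n. F (s n) x)"
proof -
  obtain D where D: "countable D" "\<And>x e. 0 < e \<Longrightarrow> \<exists>d\<in>D. \<exists>m\<in>M. norm (x - (d + m)) < e"
    using quotient_separable_dense[OF M(1)] subspace_0[OF M(2)] by blast
  have "bounded (range (\<lambda>n. F n x))" for x
    using bound unfolding bounded_real by blast
  then obtain s where s: "strict_mono s" "\<And>d. d \<in> D \<Longrightarrow> convergent (\<lambda>n. F (s n) d)"
    using diagonal_convergent_subseq[OF D(1)] by blast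
  define E where "E = {d + m | d m. d \<in> D \<and> m \<in> M}"
  have conv_E: "convergent (\<lambda>n. F (s n) y)" if y: "y \<in> E" for y
  proof -
    obtain d m where "y = d + m" "d \<in> D" "m \<in> M"
      using y by (auto simp: E_def)
    then show ?thesis
      using convergent_add[OF s(2) convergent_subseq_convergent[OF conv s(1)]]
      by (simp add: linear_add[OF lin] o_def)
  qed
  have dense_E: "\<exists>y\<in>E. norm (x - y) < e" if e: "0 < e" for x e
  proof -
    obtain d m where "d \<in> D" "m \<in> M" "norm (x - (d + m)) < e"
      using D(2)[OF e] by blast
    then show ?thesis
      unfolding E_def by blast
  qed
  have "norm (F (s n) x) \<le> B * norm x" for n x
    using bound by simp
  then have "convergent (\<lambda>n. F (s n) x)" for x
    using uniformly_bounded_linear_convergent[OF lin _ conv_E dense_E] by blast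
  then show thesis
    using that s(1) by blast
qed

lemma sdual_seq_uniform_extension:
  fixes u :: "nat \<Rightarrow> 'a::banach \<Rightarrow> real"
  assumes M: "subspace M" "closed M" and u: "\<And>n. u n \<in> sdual M"
    and bounded: "\<And>x. x \<in> M \<Longrightarrow> bounded (range (\<lambda>n. u n x))"
  obtains F B where "\<And>n. bounded_linear (F n)" "\<And>n x. \<bar>F n x\<bar> \<le> B * norm x"
    "\<And>n x. x \<in> M \<Longrightarrow> F n x = u n x"
proof -
  obtain B where B: "0 \<le> B" "\<And>n x. x \<in> M \<Longrightarrow> \<bar>u n x\<bar> \<le> B * norm x"
    using sdual_uniform_bound[OF M u bounded] by blast
  have "\<forall>n. \<exists>F. bounded_linear F \<and> (\<forall>x. \<bar>F x\<bar> \<le> B * norm x) \<and> (\<forall>x\<in>M. F x = u n x)"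
  proof
    fix n
    obtain F where "bounded_linear F" "\<And>x. \<bar>F x\<bar> \<le> B * norm x" "\<And>x. x \<in> M \<Longrightarrow> F x = u n x"
      using Hahn_Banach_norm[OF M(1) u[of n] B(1) B(2)] by blast
    then show "\<exists>F. bounded_linear F \<and> (\<forall>x. \<bar>F x\<bar> \<le> B * norm x) \<and> (\<forall>x\<in>M. F x = u n x)"
      by blast
  qed
  then obtain F where "\<forall>n. bounded_linear (F n) \<and> (\<forall>x. \<bar>F n x\<bar> \<le> B * norm x) \<and> (\<forall>x\<in>M. F n x = u n x)"
    by (rule choice[THEN exE])
  then have "\<And>n. bounded_linear (F n)" "\<And>n x. \<bar>F n x\<bar> \<le> B * norm x"
    "\<And>n x. x \<in> M \<Longrightarrow> F n x = u n x"
    by blast+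
  then show thesis
    by (rule that)
qed

lemma weak_star_null_subseq_weakly_null:
  fixes u :: "nat \<Rightarrow> 'a::banach \<Rightarrow> real"
  assumes X: "grothendieck_space (UNIV :: 'a set)"
    and M: "subspace M" "closed M" "quotient_separable M"
    and u: "\<And>n. u n \<in> sdual M" and lim: "\<And>x. x \<in> M \<Longrightarrow> (\<lambda>n. u n x) \<longlonglongrightarrow> 0"
  obtains s where "strict_mono s" "\<And>\<Phi>. \<Phi> \<in> sbidual M \<Longrightarrow> (\<lambda>n. \<Phi> (u (s n))) \<longlonglongrightarrow> 0"
proof -
  have bounded: "bounded (range (\<lambda>n. u n x))" if "x \<in> M" for x
    using convergent_imp_bounded[OF lim[OF that]] .
  obtain F B where F: "\<And>n. bounded_linear (F n)" "\<And>n x. \<bar>F n x\<bar> \<le> B * norm x"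
    and FM: "\<And>n x. x \<in> M \<Longrightarrow> F n x = u n x"
    using sdual_seq_uniform_extension[OF M(1,2) u bounded] by blast
  have lin: "linear (F n)" for n
    using F(1) by (rule bounded_linear.linear)
  have conv: "convergent (\<lambda>n. F n x)" if "x \<in> M" for x
    using lim[OF that] FM[OF that] by (simp add: convergentI)
  obtain s where s: "strict_mono s" "\<And>x. convergent (\<lambda>n. F (s n) x)"
    using quotient_separable_convergent_subseq[OF M(3,1) lin F(2) conv] by blast
  define L where "L x = lim (\<lambda>n. F (s n) x)" for x
  have FL: "(\<lambda>n. F (s n) x) \<longlonglongrightarrow> L x" for x
    using s(2) by (simp add: L_def convergent_LIMSEQ_iff)
  have "bounded_linear L"
    using F(2) by (intro bounded_linear_pointwise_limit[OF lin _ FL, where B = B]) simp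
  define v where "v n x = F (s n) x - L x" for n x
  have v: "v n \<in> sdual UNIV" for n
    unfolding v_def sdual_UNIV using F(1) \<open>bounded_linear L\<close> by (simp add: bounded_linear_sub)
  have v_lim: "(\<lambda>n. v n x) \<longlonglongrightarrow> 0" for x
    unfolding v_def using tendsto_diff[OF FL tendsto_const, of x "L x"] by simp
  have weakly_null: "(\<lambda>n. \<Psi> (v n)) \<longlonglongrightarrow> 0" if "\<Psi> \<in> sbidual UNIV" for \<Psi>
    by (rule grothendieck_space_null[OF X subspace_UNIV, of v \<Psi>]) (use v v_lim that in auto)
  txt \<open>Since L vanishes on M, restricting v n to M gives back u (s n).\<close>
  have "L x = 0" if "x \<in> M" for x
    using LIMSEQ_unique[OF FL] LIMSEQ_subseq_LIMSEQ[OF lim[OF that] s(1)] FM[OF that] by (simp add: o_def)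
  then have "sdual_restrict M (v n) = u (s n)" for n
    using FM sdualD(3)[OF u] by (auto simp: sdual_restrict_def v_def)
  then show thesis
    using that[OF s(1)] weakly_null[OF sbidual_comp_restrict[OF _ M(1)]] by simp
qed

theorem proposition3p1:
  fixes M :: "'a::banach set"
  assumes "grothendieck_space (UNIV :: 'a set)"
    and "subspace M" and "closed M"
    and "quotient_separable M"
  shows "grothendieck_space M"
proof (rule grothendieck_spaceI_null)
  fix u \<Phi>
  assume u: "\<And>n. u n \<in> sdual M" and lim: "\<And>x. x \<in> M \<Longrightarrow> (\<lambda>n. u n x) \<longlonglongrightarrow> 0"
    and \<Phi>: "\<Phi> \<in> sbidual M"
  show "(\<lambda>n. \<Phi> (u n)) \<longlonglongrightarrow> 0"
  proof (rule LIMSEQ_subsubseq)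
    fix q :: "nat \<Rightarrow> nat" assume "strict_mono q"
    then have "(\<lambda>n. u (q n) x) \<longlonglongrightarrow> 0" if "x \<in> M" for x
      using LIMSEQ_subseq_LIMSEQ[OF lim[OF that]] by (simp add: o_def)
    then obtain s where "strict_mono s" "(\<lambda>n. \<Phi> (u (q (s n)))) \<longlonglongrightarrow> 0"
      using weak_star_null_subseq_weakly_null[OF assms, where u = "\<lambda>n. u (q n)"] u \<Phi> by blast
    then show "\<exists>s. strict_mono s \<and> ((\<lambda>n. \<Phi> (u n)) \<circ> q \<circ> s) \<longlonglongrightarrow> 0"
      by (auto simp: o_def)
  qed
qed

end
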